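(* Let $(a_n)_{n\ge1}$ be a complex sequence with $\sum_n|a_n|/\sqrt n<\infty$, and let $C\ge0$. Then $\langle T(a_n)f,T(a_n)g\rangle_{L^2}=C^2\langle f,g\rangle_{L^2}$ for all $f,g\in C_0(0,\infty)$ if and only if for every pair of coprime positive integers $(m_0,n_0)$, $$\sum_{k=1}^\infty\frac{a_{m_0k}\overline{a_{n_0k}}}{k}=\begin{cases}C^2,& m_0=n_0=1,\\ 0,& m_0\ne n_0.\end{cases}$$
   Context: $C_0(0,\infty)$ is the space of continuous compactly supported functions on $(0,\infty)$. For such $f$, $T(a_n)f(x)=\sum_{n=1}^\infty a_nf(nx)$ ($x>0$). The inner product is that of $L^2[0,\infty)$ with Lebesgue measure. *)

theory Defs
  imports "HOL-Analysis.Analysis"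
begin

text \<open>C_0(0,infinity): continuous complex functions on (0,infinity) with compact support
  in (0,infinity), represented as functions on the whole real line that are continuous
  and vanish outside some interval [c,d] with 0 < c.\<close>
definition C0_pos :: "(real \<Rightarrow> complex) set" where
  "C0_pos = {f. continuous_on UNIV f \<and>
      (\<exists>c d. 0 < c \<and> c \<le> d \<and> (\<forall>x. x \<notin> {c..d} \<longrightarrow> f x = 0))}"

definition T_op :: "(nat \<Rightarrow> complex) \<Rightarrow> (real \<Rightarrow> complex) \<Rightarrow> real \<Rightarrow> complex" where
  "T_op a f x = (if 0 < x then (\<Sum>n. a (Suc n) * f (real (Suc n) * x)) else 0)"

definition L2_inner :: "(real \<Rightarrow> complex) \<Rightarrow> (real \<Rightarrow> complex) \<Rightarrow> complex" where
  "L2_inner f g = (LINT x:{0..}|lborel. f x * cnj (g x))"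

end

theory Submission
  imports Defs
begin

text \<open>
  For f, g in C_0(0,infinity) write D(f,g;m,n) for the integral of f(m x) cnj(g(n x)) over
  the line.  Expanding both series and interchanging sum and integral (justified by the bound
  |D(f,g;m,n)| <= K / sqrt(m n) together with the summability of |a_n| / sqrt n) gives
    <T f, T g> = sum over pairs (m,n) of a_m cnj(a_n) D(f,g;m,n),
  as an unordered, absolutely convergent sum.  Since D(f,g;d p,d q) = D(f,g;p,q) / d, grouping
  the pairs (m,n) = (d p, d q) with p, q coprime yields
    <T f, T g> = sum over coprime (p,q) of c(p,q) D(f,g;p,q),
  where c(p,q) = sum_k a_(p k) cnj(a_(q k)) / k.  This proves the "if" direction at once,
  because <f, g> = D(f,g;1,1).

  For the converse we test the isometry on tent functions of width delta centred at p and q.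
  Divided by the energy of the tent, the pair terms stay dominated by a summable bound and,
  as delta tends to 0, become a_m cnj(a_n) p/m on the ray m q = n p and 0 off it.  A
  dominated-convergence principle for unordered sums of eventually constant terms then shows
  that the series along the ray, which is exactly c(p,q), equals C^2 if p = q = 1 and 0
  otherwise.
\<close>

lemma le_sqrt_mult_if_le_both:
  fixes A x y :: real
  assumes "0 \<le> A" "A \<le> x" "A \<le> y"
  shows "A \<le> sqrt (x * y)"
proof (rule real_le_rsqrt)
  show "A\<^sup>2 \<le> x * y"
    using assms by (simp add: power2_eq_square mult_mono)
qed

lemma integrable_bounded_by_indicator:
  fixes F :: "real \<Rightarrow> 'b::{banach, second_countable_topology}"
  assumes meas: "F \<in> borel_measurable lborel"
    and bound: "\<And>x. norm (F x) \<le> M * indicator {a..b} x" and ab: "a \<le> b"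
  shows "integrable lborel F" and "(\<integral>x. norm (F x) \<partial>lborel) \<le> M * (b - a)"
proof -
  have box: "integrable lborel (\<lambda>x. M * indicator {a..b} x :: real)"
    by (intro integrable_mult_right integrable_real_indicator) (auto simp: emeasure_lborel_Icc_eq)
  show int: "integrable lborel F"
    by (rule Bochner_Integration.integrable_bound[OF box meas])
      (intro always_eventually allI order_trans[OF bound], simp)
  have "(\<integral>x. norm (F x) \<partial>lborel) \<le> (\<integral>x. M * indicator {a..b} x \<partial>lborel)"
    by (intro integral_mono integrable_norm int box bound)
  also have "\<dots> = M * (b - a)" using ab by simp
  finally show "(\<integral>x. norm (F x) \<partial>lborel) \<le> M * (b - a)" .
qed

lemma integral_series:
  fixes u :: "nat \<Rightarrow> 'a \<Rightarrow> 'b::{banach, second_countable_topology}"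
  assumes int: "\<And>i. integrable M (u i)" and sums: "\<And>x. (\<lambda>i. u i x) sums F x"
    and abs: "\<And>x. summable (\<lambda>i. norm (u i x))"
    and L1: "summable (\<lambda>i. \<integral>x. norm (u i x) \<partial>M)"
  shows "integrable M F" and "integral\<^sup>L M F = (\<Sum>i. integral\<^sup>L M (u i))"
    and "(\<integral>x. norm (F x) \<partial>M) \<le> (\<Sum>i. \<integral>x. norm (u i x) \<partial>M)"
proof -
  have F: "F = (\<lambda>x. \<Sum>i. u i x)" using sums by (auto simp: sums_iff fun_eq_iff)
  show "integrable M F" unfolding F
    by (rule integrable_suminf[OF int]) (use abs L1 in auto)
  show "integral\<^sup>L M F = (\<Sum>i. integral\<^sup>L M (u i))" unfolding F
    by (rule integral_suminf[OF int]) (use abs L1 in auto)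
  have norm_int: "integrable M (\<lambda>x. norm (u i x))" for i using int by simp
  have "(\<integral>x. norm (F x) \<partial>M) \<le> (\<integral>x. (\<Sum>i. norm (u i x)) \<partial>M)"
    by (rule integral_mono[OF integrable_norm])
       (use \<open>integrable M F\<close> integrable_suminf[OF norm_int] abs L1
         in \<open>auto simp: F norm_suminf_le\<close>)
  also have "\<dots> = (\<Sum>i. \<integral>x. norm (u i x) \<partial>M)"
    by (rule integral_suminf[OF norm_int]) (use abs L1 in auto)
  finally show "(\<integral>x. norm (F x) \<partial>M) \<le> (\<Sum>i. \<integral>x. norm (u i x) \<partial>M)" .
qed

lemma integral_product_series:
  fixes u v :: "nat \<Rightarrow> 'a \<Rightarrow> complex" and \<beta> :: "nat \<Rightarrow> real"
  assumes u: "\<And>x. (\<lambda>i. u i x) sums \<phi> x" "\<And>x. summable (\<lambda>i. norm (u i x))"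
    and v: "\<And>x. (\<lambda>j. v j x) sums \<psi> x" "\<And>x. summable (\<lambda>j. norm (v j x))"
    and int: "\<And>i j. integrable M (\<lambda>x. u i x * cnj (v j x))"
    and L1: "\<And>i j. (\<integral>x. norm (u i x * cnj (v j x)) \<partial>M) \<le> K * \<beta> i * \<beta> j"
    and \<beta>: "summable \<beta>"
  shows "(\<integral>x. \<phi> x * cnj (\<psi> x) \<partial>M) = (\<Sum>i. \<Sum>j. \<integral>x. u i x * cnj (v j x) \<partial>M)"
proof -
  define U where "U i x = u i x * cnj (\<psi> x)" for i x
  have row_L1: "summable (\<lambda>j. \<integral>x. norm (u i x * cnj (v j x)) \<partial>M)" for i
    by (rule summable_comparison_test'[OF summable_mult[OF \<beta>, of "K * \<beta> i"], of 0]) (use L1 in simp)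
  have row_sums: "(\<lambda>j. u i x * cnj (v j x)) sums U i x" for i x
    unfolding U_def using v(1) by (intro sums_mult) (simp add: sums_cnj)
  have row_abs: "summable (\<lambda>j. norm (u i x * cnj (v j x)))" for i x
    using summable_mult[OF v(2), of "norm (u i x)"] by (simp add: norm_mult)
  note row = integral_series[OF int row_sums row_abs row_L1]
  have U_L1: "(\<integral>x. norm (U i x) \<partial>M) \<le> K * \<beta> i * suminf \<beta>" for i
  proof -
    have "(\<integral>x. norm (U i x) \<partial>M) \<le> (\<Sum>j. K * \<beta> i * \<beta> j)"
      by (rule order_trans[OF row(3) suminf_le[OF L1 row_L1 summable_mult[OF \<beta>]]])
    then show ?thesis using \<beta> by (simp add: suminf_mult)
  qed
  have col_sums: "(\<lambda>i. U i x) sums (\<phi> x * cnj (\<psi> x))" for x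
    unfolding U_def by (rule sums_mult2[OF u(1)])
  have col_abs: "summable (\<lambda>i. norm (U i x))" for x
    using summable_mult2[OF u(2), of x "norm (\<psi> x)"] by (simp add: U_def norm_mult)
  have col_L1: "summable (\<lambda>i. \<integral>x. norm (U i x) \<partial>M)"
    by (rule summable_comparison_test'[OF summable_mult2[OF summable_mult[OF \<beta>, of K]], of 0])
       (use U_L1 in simp)
  show ?thesis
    using integral_series(2)[OF row(1) col_sums col_abs col_L1] row(2) by simp
qed

lemma product_summable_on:
  fixes \<beta> :: "nat \<Rightarrow> real"
  assumes \<beta>: "summable \<beta>" and \<beta>0: "\<And>i. 0 \<le> \<beta> i"
  shows "(\<lambda>(i,j). \<beta> i * \<beta> j) summable_on UNIV"
proof -
  have rows: "((\<lambda>j. \<beta> i * \<beta> j) has_sum (\<beta> i * suminf \<beta>)) UNIV" for i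
  proof (rule norm_summable_imp_has_sum)
    show "summable (\<lambda>j. norm (\<beta> i * \<beta> j))"
      using summable_mult[OF \<beta>] \<beta>0 by (simp add: abs_mult)
    show "(\<lambda>j. \<beta> i * \<beta> j) sums (\<beta> i * suminf \<beta>)"
      using \<beta> by (intro sums_mult summable_sums)
  qed
  have cols: "(\<lambda>i. \<beta> i * suminf \<beta>) summable_on UNIV"
    using \<beta> \<beta>0 suminf_nonneg[OF \<beta>]
    by (subst summable_on_UNIV_nonneg_real_iff) (auto intro!: summable_mult2)
  have "(\<lambda>(i,j). \<beta> i * \<beta> j) summable_on Sigma UNIV (\<lambda>_. UNIV)"
    by (rule summable_on_SigmaI[OF _ cols]) (use rows \<beta>0 in auto)
  then show ?thesis by simp
qed

lemma iterated_sum_has_sum: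
  fixes b :: "nat \<Rightarrow> nat \<Rightarrow> complex" and \<beta> :: "nat \<Rightarrow> real"
  assumes \<beta>: "summable \<beta>" "\<And>i. 0 \<le> \<beta> i"
    and bound: "\<And>i j. norm (b i j) \<le> K * \<beta> i * \<beta> j"
  shows "((\<lambda>(i,j). b i j) has_sum (\<Sum>i. \<Sum>j. b i j)) UNIV"
proof -
  have "(\<lambda>x. K * (\<lambda>(i,j). \<beta> i * \<beta> j) x) summable_on UNIV"
    by (rule summable_on_cmult_right[OF product_summable_on[OF \<beta>]])
  then have "(\<lambda>x. norm ((\<lambda>(i,j). b i j) x)) summable_on UNIV"
    by (rule Infinite_Sum.abs_summable_on_comparison_test') (use bound in \<open>auto simp: mult.assoc\<close>)
  then have hs: "((\<lambda>(i,j). b i j) has_sum (\<Sum>\<^sub>\<infinity>(i,j). b i j)) (Sigma UNIV (\<lambda>_. UNIV))"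
    by (simp add: abs_summable_summable)
  have rows: "((\<lambda>j. b i j) has_sum (\<Sum>j. b i j)) UNIV" for i
  proof (rule norm_summable_imp_has_sum)
    show abs: "summable (\<lambda>j. norm (b i j))"
      by (rule summable_comparison_test'[OF summable_mult[OF \<beta>(1), of "K * \<beta> i"], of 0])
         (simp add: bound)
    show "(\<lambda>j. b i j) sums (\<Sum>j. b i j)"
      using summable_norm_cancel[OF abs] by (rule summable_sums)
  qed
  have "((\<lambda>i. \<Sum>j. b i j) has_sum (\<Sum>\<^sub>\<infinity>(i,j). b i j)) UNIV"
    by (rule has_sum_Sigma'[OF hs]) (use rows in simp)
  then have "(\<Sum>i. \<Sum>j. b i j) = (\<Sum>\<^sub>\<infinity>(i,j). b i j)"
    by (simp add: has_sum_imp_sums sums_unique[symmetric])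
  then show ?thesis using hs by simp
qed

lemma has_sum_diff_le_tail:
  fixes t l :: "'a \<Rightarrow> 'b::banach"
  assumes t: "(t has_sum R) S" and l: "(l has_sum L) S" and B: "B summable_on S"
    and E: "finite E" "E \<subseteq> S" and agree: "\<And>x. x \<in> E \<Longrightarrow> t x = l x"
    and t_bound: "\<And>x. x \<in> S \<Longrightarrow> norm (t x) \<le> B x"
    and l_bound: "\<And>x. x \<in> S \<Longrightarrow> norm (l x) \<le> B x"
  shows "norm (R - L) \<le> 2 * infsum B (S - E)"
proof -
  have "((\<lambda>x. t x - l x) has_sum (R - L)) S"
    using has_sum_add[OF t, of "\<lambda>x. - l x" "- L"] l by (simp add: has_sum_uminus)
  then have diff: "((\<lambda>x. t x - l x) has_sum (R - L)) (S - E)"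
    by (rule has_sum_cong_neutral[THEN iffD1, rotated -1]) (use agree E(2) in auto)
  have "B summable_on (S - E)"
    using summable_on_Diff[OF B summable_on_finite[OF E(1)] E(2)] .
  then have "((\<lambda>x. 2 * B x) has_sum (2 * infsum B (S - E))) (S - E)"
    by (intro has_sum_cmult_right has_sum_infsum)
  then show ?thesis
  proof (rule norm_infsum_le[OF diff])
    fix x assume x: "x \<in> S - E"
    have "norm (t x - l x) \<le> norm (t x) + norm (l x)" by (rule norm_triangle_ineq4)
    also have "\<dots> \<le> B x + B x" using t_bound l_bound x by (intro add_mono) auto
    finally show "norm (t x - l x) \<le> 2 * B x" by simp
  qed
qed

lemma has_sum_eventually_const_dominated:
  fixes t :: "'i \<Rightarrow> 'a \<Rightarrow> 'b::banach"
  assumes F: "F \<noteq> bot" and B: "B summable_on S"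
    and bound: "eventually (\<lambda>\<delta>. \<forall>x\<in>S. norm (t \<delta> x) \<le> B x) F"
    and lim: "\<And>x. x \<in> S \<Longrightarrow> eventually (\<lambda>\<delta>. t \<delta> x = l x) F"
    and sums: "eventually (\<lambda>\<delta>. (t \<delta> has_sum R) S) F"
  shows "(l has_sum R) S"
proof -
  have l_bound: "norm (l x) \<le> B x" if x: "x \<in> S" for x
  proof -
    have "eventually (\<lambda>\<delta>. norm (t \<delta> x) \<le> B x \<and> t \<delta> x = l x) F"
      using bound lim[OF x] by eventually_elim (use x in auto)
    then obtain \<delta> where "norm (t \<delta> x) \<le> B x" "t \<delta> x = l x"
      using eventually_happens'[OF F] by blast
    then show ?thesis by simp
  qed
  have "(\<lambda>x. norm (l x)) summable_on S"
    by (rule Infinite_Sum.abs_summable_on_comparison_test'[OF B l_bound])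
  then have l: "(l has_sum infsum l S) S"
    using abs_summable_summable has_sum_infsum by blast
  have small: "norm (R - infsum l S) \<le> 2 * \<epsilon>" if \<epsilon>: "\<epsilon> > 0" for \<epsilon>
  proof -
    obtain E where E: "finite E" "E \<subseteq> S" "dist (sum B E) (infsum B S) \<le> \<epsilon>"
      using infsum_finite_approximation[OF B \<epsilon>] by blast
    have tail: "infsum B (S - E) \<le> \<epsilon>"
      using infsum_Diff[OF B summable_on_finite[OF E(1)] E(2)] E by (simp add: dist_real_def)
    have "eventually (\<lambda>\<delta>. \<forall>x\<in>E. t \<delta> x = l x) F"
      using E lim by (intro eventually_ball_finite) auto
    then have "eventually (\<lambda>\<delta>. (\<forall>x\<in>E. t \<delta> x = l x) \<and> (\<forall>x\<in>S. norm (t \<delta> x) \<le> B x)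
        \<and> (t \<delta> has_sum R) S) F"
      using bound sums by eventually_elim blast
    then obtain \<delta> where \<delta>: "\<forall>x\<in>E. t \<delta> x = l x" "\<forall>x\<in>S. norm (t \<delta> x) \<le> B x"
      "(t \<delta> has_sum R) S"
      using eventually_happens'[OF F] by blast
    have "norm (R - infsum l S) \<le> 2 * infsum B (S - E)"
      by (rule has_sum_diff_le_tail[OF \<delta>(3) l B E(1,2)]) (use \<delta> l_bound in auto)
    then show ?thesis using tail by linarith
  qed
  have "norm (R - infsum l S) \<le> 0"
  proof (rule field_le_epsilon)
    fix e :: real assume "0 < e"
    then show "norm (R - infsum l S) \<le> 0 + e" using small[of "e / 2"] by simp
  qed
  then show ?thesis using l by simp
qed

lemma C0_posE:
  assumes "f \<in> C0_pos"
  obtains c d M where "0 < c" "c \<le> d" "continuous_on UNIV f"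
    "\<And>x. x \<notin> {c..d} \<Longrightarrow> f x = 0" "\<And>x. norm (f x) \<le> M * indicator {c..d} x"
proof -
  from assms obtain c d where cd: "0 < c" "c \<le> d" "\<And>x. x \<notin> {c..d} \<Longrightarrow> f x = 0"
    and cont: "continuous_on UNIV f" unfolding C0_pos_def by blast
  have "compact (f ` {c..d})"
    by (rule compact_continuous_image[OF continuous_on_subset[OF cont]]) auto
  then obtain M where M: "\<And>y. y \<in> f ` {c..d} \<Longrightarrow> norm y \<le> M"
    using compact_imp_bounded bounded_iff by metis
  have "norm (f x) \<le> M * indicator {c..d} x" for x
    using M cd(3)[of x] by (cases "x \<in> {c..d}") auto
  then show ?thesis using that cd cont by blast
qed

lemma C0_pos_vanishes_nonpos: "f \<in> C0_pos \<Longrightarrow> x \<le> 0 \<Longrightarrow> f x = 0"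
  unfolding C0_pos_def by force

text \<open>For a test function f and any x, only finitely many of the values f(n x) are nonzero, so
  the series defining T(a) f (x) is a finite sum; in particular it converges absolutely.\<close>
lemma T_op_sums:
  assumes f: "f \<in> C0_pos"
  shows "(\<lambda>i. a (Suc i) * f (real (Suc i) * x)) sums T_op a f x"
    and "summable (\<lambda>i. norm (a (Suc i) * f (real (Suc i) * x)))"
proof -
  obtain c d where cd: "0 < c" "\<And>x. x \<notin> {c..d} \<Longrightarrow> f x = 0"
    using C0_posE[OF f] by metis
  have "{i. f (real (Suc i) * x) \<noteq> 0} \<subseteq> {..nat \<lceil>d / x\<rceil>}"
  proof
    fix i assume "i \<in> {i. f (real (Suc i) * x) \<noteq> 0}"
    then have "real (Suc i) * x \<in> {c..d}" using cd(2) by blast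
    then have "0 < real (Suc i) * x" "real (Suc i) * x \<le> d" using cd(1) by auto
    then have "x > 0" "real (Suc i) * x \<le> d" by (auto simp: zero_less_mult_iff)
    then have "real i \<le> d / x" by (simp add: field_simps)
    then show "i \<in> {..nat \<lceil>d / x\<rceil>}" by (simp add: le_nat_iff le_ceiling_iff)
  qed
  then have "{i. a (Suc i) * f (real (Suc i) * x) \<noteq> 0} \<subseteq> {..nat \<lceil>d / x\<rceil>}" by auto
  then have fin: "finite {i. a (Suc i) * f (real (Suc i) * x) \<noteq> 0}"
    by (rule finite_subset) simp
  show "summable (\<lambda>i. norm (a (Suc i) * f (real (Suc i) * x)))"
    by (rule summable_finite[OF fin]) auto
  have "(\<lambda>i. a (Suc i) * f (real (Suc i) * x)) sums (\<Sum>i. a (Suc i) * f (real (Suc i) * x))"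
    by (rule summable_sums[OF summable_finite[OF fin]]) auto
  moreover have "(\<lambda>i. a (Suc i) * f (real (Suc i) * x)) = (\<lambda>i. 0)" if "x \<le> 0"
    using C0_pos_vanishes_nonpos[OF f] that by (auto simp: mult_nonneg_nonpos)
  ultimately show "(\<lambda>i. a (Suc i) * f (real (Suc i) * x)) sums T_op a f x"
    by (cases "x > 0") (auto simp: T_op_def)
qed

lemma L2_inner_lborel:
  assumes "\<And>x. x < 0 \<Longrightarrow> h x = 0"
  shows "L2_inner h k = (\<integral>x. h x * cnj (k x) \<partial>lborel)"
  unfolding L2_inner_def set_lebesgue_integral_def
  by (intro Bochner_Integration.integral_cong) (auto simp: assms indicator_def)

section \<open>Dilation integrals\<close>

definition dil_inner :: "(real \<Rightarrow> complex) \<Rightarrow> (real \<Rightarrow> complex) \<Rightarrow> nat \<Rightarrow> nat \<Rightarrow> complex" where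
  "dil_inner f g m n = (\<integral>x. f (real m * x) * cnj (g (real n * x)) \<partial>lborel)"

lemma L2_inner_dil_inner: "f \<in> C0_pos \<Longrightarrow> L2_inner f g = dil_inner f g 1 1"
  unfolding dil_inner_def by (subst L2_inner_lborel) (auto intro: C0_pos_vanishes_nonpos)

lemma dil_inner_scale:
  assumes "0 < d"
  shows "dil_inner f g (d * p) (d * q) = dil_inner f g p q / of_nat d"
proof -
  define F where "F y = f (real p * y) * cnj (g (real q * y))" for y
  have "dil_inner f g p q = \<bar>real d\<bar> *\<^sub>R (\<integral>x. F (0 + real d * x) \<partial>lborel)"
    unfolding dil_inner_def F_def[symmetric] using assms by (intro lborel_integral_real_affine) auto
  also have "(\<integral>x. F (0 + real d * x) \<partial>lborel) = dil_inner f g (d * p) (d * q)"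
    unfolding dil_inner_def F_def by (simp add: mult_ac)
  finally show ?thesis using assms by (simp add: scaleR_conv_of_real field_simps)
qed

lemma indicator_bound_const:
  assumes bound: "\<And>x. norm (f x) \<le> M * indicator {c..d} x" and cd: "c \<le> (d::real)"
  shows "0 \<le> M" and "norm (f x) \<le> M"
proof -
  show M: "0 \<le> M" using bound[of c] cd by (auto intro: order_trans[OF norm_ge_zero])
  show "norm (f x) \<le> M"
    by (rule order_trans[OF bound mult_left_le[OF _ M]]) (simp add: indicator_def)
qed

lemma indicator_Icc_scale:
  fixes c d r x :: real
  assumes "0 < r"
  shows "indicator {c..d} (r * x) = (indicator {c / r..d / r} x :: real)"
  using assms by (auto simp: indicator_def field_simps)

text \<open>The basic estimate: if f and g are bounded by Mf, Mg and supported in intervals of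
  lengths lf, lg, then f(m x) cnj(g(n x)) is integrable with L1 norm at most
  Mf Mg sqrt(lf lg / (m n)), since the product is supported in intervals of length lf/m and
  lg/n.\<close>
lemma dilation_product_bound:
  fixes f g :: "real \<Rightarrow> complex" and m n :: real
  assumes cont: "continuous_on UNIV f" "continuous_on UNIV g"
    and f: "\<And>x. norm (f x) \<le> Mf * indicator {cf..df} x" "cf \<le> df"
    and g: "\<And>x. norm (g x) \<le> Mg * indicator {cg..dg} x" "cg \<le> dg"
    and mn: "0 < m" "0 < n"
  shows "integrable lborel (\<lambda>x. f (m * x) * cnj (g (n * x)))"
    and "(\<integral>x. norm (f (m * x) * cnj (g (n * x))) \<partial>lborel)
           \<le> Mf * Mg * sqrt ((df - cf) * (dg - cg) / (m * n))"
proof -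
  let ?H = "\<lambda>x. f (m * x) * cnj (g (n * x))"
  note Mf = indicator_bound_const[OF f]
  note Mg = indicator_bound_const[OF g]
  have "continuous_on UNIV (\<lambda>x. f (m * x))" "continuous_on UNIV (\<lambda>x. g (n * x))"
    by (rule continuous_on_compose2[OF cont(1)] continuous_on_compose2[OF cont(2)],
        auto intro: continuous_intros)+
  then have "continuous_on UNIV ?H" by (intro continuous_intros)
  then have meas: "?H \<in> borel_measurable lborel" using borel_measurable_continuous_onI by simp
  have Hf: "norm (?H x) \<le> (Mf * Mg) * indicator {cf / m..df / m} x" for x
  proof -
    have "norm (?H x) \<le> Mf * indicator {cf..df} (m * x) * Mg"
      unfolding norm_mult complex_mod_cnj using f(1) Mg Mf by (intro mult_mono) auto
    then show ?thesis using indicator_Icc_scale[OF mn(1)] by (simp add: mult_ac)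
  qed
  have Hg: "norm (?H x) \<le> (Mf * Mg) * indicator {cg / n..dg / n} x" for x
  proof -
    have "norm (?H x) \<le> Mf * (Mg * indicator {cg..dg} (n * x))"
      unfolding norm_mult complex_mod_cnj using Mf g(1) by (intro mult_mono) auto
    then show ?thesis using indicator_Icc_scale[OF mn(2)] by (simp add: mult_ac)
  qed
  have cfdf: "cf / m \<le> df / m" and cgdg: "cg / n \<le> dg / n"
    using f(2) g(2) mn by (auto intro: divide_right_mono)
  note I1 = integrable_bounded_by_indicator[OF meas Hf cfdf]
  note I2 = integrable_bounded_by_indicator[OF meas Hg cgdg]
  show "integrable lborel ?H" by (rule I1(1))
  have "(\<integral>x. norm (?H x) \<partial>lborel) \<le> sqrt ((Mf * Mg * (df / m - cf / m)) * (Mf * Mg * (dg / n - cg / n)))"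
    by (rule le_sqrt_mult_if_le_both[OF _ I1(2) I2(2)]) simp
  also have "\<dots> = sqrt ((Mf * Mg)\<^sup>2 * ((df - cf) * (dg - cg) / (m * n)))"
    by (simp add: power2_eq_square diff_divide_distrib[symmetric] field_simps)
  also have "\<dots> = Mf * Mg * sqrt ((df - cf) * (dg - cg) / (m * n))"
    using Mf Mg by (subst real_sqrt_mult) simp
  finally show "(\<integral>x. norm (?H x) \<partial>lborel) \<le> Mf * Mg * sqrt ((df - cf) * (dg - cg) / (m * n))" .
qed

lemma C0_dil_bound:
  assumes f: "f \<in> C0_pos" and g: "g \<in> C0_pos"
  obtains K where "0 \<le> K"
    and "\<And>m n. 0 < m \<Longrightarrow> 0 < n \<Longrightarrow> integrable lborel (\<lambda>x. f (real m * x) * cnj (g (real n * x)))"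
    and "\<And>m n. 0 < m \<Longrightarrow> 0 < n \<Longrightarrow>
      (\<integral>x. norm (f (real m * x) * cnj (g (real n * x))) \<partial>lborel) \<le> K / sqrt (real m * real n)"
proof -
  obtain cf df Mf where F: "0 < cf" "cf \<le> df" "continuous_on UNIV f"
    "\<And>x. x \<notin> {cf..df} \<Longrightarrow> f x = 0" "\<And>x. norm (f x) \<le> Mf * indicator {cf..df} x"
    using C0_posE[OF f] by metis
  obtain cg dg Mg where G: "0 < cg" "cg \<le> dg" "continuous_on UNIV g"
    "\<And>x. x \<notin> {cg..dg} \<Longrightarrow> g x = 0" "\<And>x. norm (g x) \<le> Mg * indicator {cg..dg} x"
    using C0_posE[OF g] by metis
  have Mf: "0 \<le> Mf" and Mg: "0 \<le> Mg"
    using indicator_bound_const(1)[OF F(5) F(2)] indicator_bound_const(1)[OF G(5) G(2)] .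
  note B = dilation_product_bound[OF F(3) G(3) F(5) F(2) G(5) G(2)]
  show ?thesis
  proof (rule that[of "Mf * Mg * sqrt ((df - cf) * (dg - cg))"])
    show "0 \<le> Mf * Mg * sqrt ((df - cf) * (dg - cg))" using Mf Mg F(2) G(2) by simp
    fix m n :: nat assume "0 < m" "0 < n"
    then show "integrable lborel (\<lambda>x. f (real m * x) * cnj (g (real n * x)))"
      and "(\<integral>x. norm (f (real m * x) * cnj (g (real n * x))) \<partial>lborel)
             \<le> Mf * Mg * sqrt ((df - cf) * (dg - cg)) / sqrt (real m * real n)"
      using B[of m n] by (auto simp: real_sqrt_divide)
  qed
qed

abbreviation pos_pairs :: "(nat \<times> nat) set" where
  "pos_pairs \<equiv> {0<..} \<times> {0<..}"

lemma bij_Suc_pairs: "bij_betw (\<lambda>(i,j). (Suc i, Suc j)) UNIV pos_pairs"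
proof (rule bij_betwI')
  fix y :: "nat \<times> nat" assume "y \<in> pos_pairs"
  then show "\<exists>x\<in>UNIV. y = (\<lambda>(i,j). (Suc i, Suc j)) x"
    by (intro bexI[of _ "(fst y - 1, snd y - 1)"]) (auto simp: prod_eq_iff)
qed auto

lemma T_inner_expansion:
  fixes a :: "nat \<Rightarrow> complex"
  assumes f: "f \<in> C0_pos" and g: "g \<in> C0_pos"
    and a: "summable (\<lambda>n. norm (a (Suc n)) / sqrt (real (Suc n)))"
  shows "((\<lambda>(m,n). a m * cnj (a n) * dil_inner f g m n) has_sum L2_inner (T_op a f) (T_op a g))
           pos_pairs"
proof -
  obtain K where K: "0 \<le> K"
    and int: "\<And>m n. 0 < m \<Longrightarrow> 0 < n \<Longrightarrow> integrable lborel (\<lambda>x. f (real m * x) * cnj (g (real n * x)))"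
    and L1: "\<And>m n. 0 < m \<Longrightarrow> 0 < n \<Longrightarrow>
      (\<integral>x. norm (f (real m * x) * cnj (g (real n * x))) \<partial>lborel) \<le> K / sqrt (real m * real n)"
    using C0_dil_bound[OF f g] by blast
  define \<beta> where "\<beta> i = norm (a (Suc i)) / sqrt (real (Suc i))" for i
  have \<beta>: "summable \<beta>" "\<And>i. 0 \<le> \<beta> i" using a unfolding \<beta>_def by simp_all
  define u where "u h i x = a (Suc i) * h (real (Suc i) * x)" for h :: "real \<Rightarrow> complex" and i x
  define b where "b i j = a (Suc i) * cnj (a (Suc j)) * dil_inner f g (Suc i) (Suc j)" for i j
  have u_prod: "u f i x * cnj (u g j x)
      = a (Suc i) * cnj (a (Suc j)) * (f (real (Suc i) * x) * cnj (g (real (Suc j) * x)))" for i j x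
    by (simp add: u_def mult_ac)
  have u_int: "integrable lborel (\<lambda>x. u f i x * cnj (u g j x))" for i j
    unfolding u_prod using int[of "Suc i" "Suc j"] by (intro integrable_mult_right) auto
  have u_L1: "(\<integral>x. norm (u f i x * cnj (u g j x)) \<partial>lborel) \<le> K * \<beta> i * \<beta> j" for i j
  proof -
    have "(\<integral>x. norm (u f i x * cnj (u g j x)) \<partial>lborel) = norm (a (Suc i)) * norm (a (Suc j)) *
        (\<integral>x. norm (f (real (Suc i) * x) * cnj (g (real (Suc j) * x))) \<partial>lborel)"
      unfolding u_prod by (simp add: norm_mult mult.assoc)
    also have "\<dots> \<le> norm (a (Suc i)) * norm (a (Suc j)) * (K / sqrt (real (Suc i) * real (Suc j)))"
      using L1[of "Suc i" "Suc j"] by (intro mult_left_mono) auto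
    also have "\<dots> = K * \<beta> i * \<beta> j" by (simp add: \<beta>_def real_sqrt_mult)
    finally show ?thesis .
  qed
  have "L2_inner (T_op a f) (T_op a g) = (\<integral>x. T_op a f x * cnj (T_op a g x) \<partial>lborel)"
    by (rule L2_inner_lborel) (simp add: T_op_def)
  also have "\<dots> = (\<Sum>i. \<Sum>j. \<integral>x. u f i x * cnj (u g j x) \<partial>lborel)"
    by (rule integral_product_series[OF _ _ _ _ u_int u_L1 \<beta>(1)])
       (use T_op_sums[OF f] T_op_sums[OF g] in \<open>auto simp: u_def\<close>)
  also have "\<dots> = (\<Sum>i. \<Sum>j. b i j)" by (simp add: u_prod b_def dil_inner_def)
  finally have L2_eq: "L2_inner (T_op a f) (T_op a g) = (\<Sum>i. \<Sum>j. b i j)" .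
  have b_bound: "norm (b i j) \<le> K * \<beta> i * \<beta> j" for i j
    using integral_norm_bound[of lborel "\<lambda>x. u f i x * cnj (u g j x)"] u_L1[of i j]
    by (simp add: b_def dil_inner_def u_prod)
  have "((\<lambda>(i,j). b i j) has_sum L2_inner (T_op a f) (T_op a g)) UNIV"
    unfolding L2_eq by (rule iterated_sum_has_sum[OF \<beta> b_bound])
  then show ?thesis
    by (subst has_sum_reindex_bij_betw[OF bij_Suc_pairs, symmetric]) (simp add: b_def case_prod_beta')
qed

section \<open>Grouping the pairs along rays through coprime pairs\<close>

abbreviation coprime_pairs :: "(nat \<times> nat) set" where
  "coprime_pairs \<equiv> {(p,q). 0 < p \<and> 0 < q \<and> coprime p q}"

text \<open>Every pair of positive integers is uniquely d (p,q) with d = gcd and (p,q) coprime.\<close>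
lemma coprime_pairs_scale_bij:
  "bij_betw (\<lambda>((p,q),d). (d * p, d * q)) (coprime_pairs \<times> {0<..}) pos_pairs"
proof (rule bij_betwI')
  fix x y :: "(nat \<times> nat) \<times> nat"
  assume x: "x \<in> coprime_pairs \<times> {0<..}" and y: "y \<in> coprime_pairs \<times> {0<..}"
  obtain p q d p' q' d' where xy: "x = ((p,q),d)" "y = ((p',q'),d')" by (metis prod.collapse)
  show "((\<lambda>((p,q),d). (d * p, d * q)) x = (\<lambda>((p,q),d). (d * p, d * q)) y) = (x = y)"
  proof
    assume "(\<lambda>((p,q),d). (d * p, d * q)) x = (\<lambda>((p,q),d). (d * p, d * q)) y"
    then have eq: "d * p = d' * p'" "d * q = d' * q'" using xy by auto
    have "d = gcd (d * p) (d * q)" "d' = gcd (d' * p') (d' * q')"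
      using x y xy by (simp_all add: gcd_mult_distrib_nat[symmetric])
    then have "d = d'" using eq by simp
    then show "x = y" using eq x xy by auto
  qed simp
next
  fix x assume "x \<in> coprime_pairs \<times> {0::nat<..}"
  then show "(\<lambda>((p,q),d). (d * p, d * q)) x \<in> pos_pairs" by auto
next
  fix y assume y: "y \<in> pos_pairs"
  obtain m n where mn: "y = (m,n)" "0 < m" "0 < n" using y by auto
  define d where "d = gcd m n"
  have d: "0 < d" "m = d * (m div d)" "n = d * (n div d)" using mn by (simp_all add: d_def)
  have "coprime (m div d) (n div d)" unfolding d_def using mn by (intro div_gcd_coprime) auto
  moreover have "0 < m div d" "0 < n div d" using d mn by (metis gr0I mult_0_right)+
  ultimately show "\<exists>x\<in>coprime_pairs \<times> {0<..}. y = (\<lambda>((p,q),d). (d * p, d * q)) x"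
    using d mn by (intro bexI[of _ "((m div d, n div d), d)"]) auto
qed

lemma infsum_pos_nat_eq_suminf:
  fixes h :: "nat \<Rightarrow> 'b::{topological_comm_monoid_add, t2_space}"
  assumes "h summable_on {0<..}"
  shows "infsum h {0<..} = (\<Sum>k. h (Suc k))"
proof -
  have bij: "bij_betw Suc UNIV {0::nat<..}"
    by (rule bij_betw_imageI) (auto simp: image_iff gr0_conv_Suc)
  have "(h has_sum infsum h {0<..}) {0<..}" using assms by simp
  then have "((h \<circ> Suc) has_sum infsum h {0<..}) UNIV"
    unfolding comp_def using has_sum_reindex_bij_betw[OF bij, of h] by simp
  then have "(\<lambda>k. h (Suc k)) sums infsum h {0<..}" by (auto dest: has_sum_imp_sums simp: comp_def)
  then show ?thesis by (rule sums_unique)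
qed

text \<open>A summable family over the positive integers that equals c times h sums to c times the
  series of h; no summability of h is assumed, since for c = 0 both sides vanish.\<close>
lemma has_sum_pos_nat_cmult:
  fixes F h :: "nat \<Rightarrow> complex"
  assumes F: "F summable_on {0<..}" and F_eq: "\<And>d. 0 < d \<Longrightarrow> F d = c * h d"
  shows "(F has_sum c * (\<Sum>k. h (Suc k))) {0<..}"
proof -
  have "infsum F {0<..} = infsum (\<lambda>d. c * h d) {0<..}"
    by (rule infsum_cong) (simp add: F_eq)
  also have "\<dots> = c * infsum h {0<..}" by (rule infsum_cmult_right')
  also have "\<dots> = c * (\<Sum>k. h (Suc k))"
  proof (cases "c = 0")
    case False
    have "(\<lambda>d. c * h d) summable_on {0<..}"
      using F summable_on_cong[of "{0<..}" F "\<lambda>d. c * h d"] F_eq by auto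
    then have "h summable_on {0<..}" using summable_on_cmult_right'[OF False] by blast
    then show ?thesis by (simp add: infsum_pos_nat_eq_suminf)
  qed simp
  finally show ?thesis using has_sum_infsum[OF F] by simp
qed

lemma has_sum_group_by_rays:
  fixes a :: "nat \<Rightarrow> complex" and J :: "nat \<Rightarrow> nat \<Rightarrow> complex"
  assumes hs: "((\<lambda>(m,n). a m * cnj (a n) * J m n) has_sum s) pos_pairs"
    and homog: "\<And>d p q. 0 < d \<Longrightarrow> J (d * p) (d * q) = J p q / of_nat d"
  shows "((\<lambda>(p,q). (\<Sum>k. a (p * Suc k) * cnj (a (q * Suc k)) / of_nat (Suc k)) * J p q)
           has_sum s) coprime_pairs"
proof -
  define F where "F x d = a (d * fst x) * cnj (a (d * snd x)) * J (d * fst x) (d * snd x)" for x d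
  have "((\<lambda>z. (\<lambda>(m,n). a m * cnj (a n) * J m n) ((\<lambda>((p,q),d). (d * p, d * q)) z)) has_sum s)
      (coprime_pairs \<times> {0<..})"
    using hs has_sum_reindex_bij_betw[OF coprime_pairs_scale_bij] by blast
  moreover have "(\<lambda>z. (\<lambda>(m,n). a m * cnj (a n) * J m n) ((\<lambda>((p,q),d). (d * p, d * q)) z))
      = (\<lambda>(x,d). F x d)"
    by (auto simp: F_def fun_eq_iff)
  ultimately have sum_rays: "((\<lambda>(x,d). F x d) has_sum s) (Sigma coprime_pairs (\<lambda>_. {0<..}))"
    by simp
  have ray: "(F x has_sum
      (\<lambda>(p,q). (\<Sum>k. a (p * Suc k) * cnj (a (q * Suc k)) / of_nat (Suc k)) * J p q) x) {0<..}"
    if x: "x \<in> coprime_pairs" for x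
  proof -
    obtain p q where pq: "x = (p,q)" by (metis prod.collapse)
    have "(F x has_sum J p q * (\<Sum>k. a (p * Suc k) * cnj (a (q * Suc k)) / of_nat (Suc k))) {0<..}"
    proof (rule has_sum_pos_nat_cmult)
      show "F x summable_on {0<..}"
        by (rule summable_on_SigmaD1[OF has_sum_imp_summable[OF sum_rays] x])
      show "F x d = J p q * (a (p * d) * cnj (a (q * d)) / of_nat d)" if "0 < d" for d
        using that homog[of d p q] by (simp add: F_def pq mult_ac)
    qed
    then show ?thesis by (simp add: pq mult.commute)
  qed
  show ?thesis
  proof (rule has_sum_Sigma'[OF sum_rays])
    fix x assume "x \<in> coprime_pairs"
    then show "((\<lambda>d. (\<lambda>(x,d). F x d) (x,d)) has_sum
      (\<lambda>(p,q). (\<Sum>k. a (p * Suc k) * cnj (a (q * Suc k)) / of_nat (Suc k)) * J p q) x) {0<..}"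
      unfolding prod.case by (rule ray)
  qed
qed

lemma T_inner_coprime_expansion:
  fixes a :: "nat \<Rightarrow> complex"
  assumes "f \<in> C0_pos" "g \<in> C0_pos" "summable (\<lambda>n. norm (a (Suc n)) / sqrt (real (Suc n)))"
  shows "((\<lambda>(p,q). (\<Sum>k. a (p * Suc k) * cnj (a (q * Suc k)) / of_nat (Suc k)) * dil_inner f g p q)
           has_sum L2_inner (T_op a f) (T_op a g)) coprime_pairs"
  by (rule has_sum_group_by_rays[OF T_inner_expansion[OF assms]]) (rule dil_inner_scale)

section \<open>The coefficient identities imply the isometry\<close>

lemma isometry_if_coefficient_identities:
  fixes a :: "nat \<Rightarrow> complex"
  assumes f: "f \<in> C0_pos" and g: "g \<in> C0_pos"
    and a: "summable (\<lambda>n. norm (a (Suc n)) / sqrt (real (Suc n)))"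
    and coeff: "\<And>p q. 0 < p \<Longrightarrow> 0 < q \<Longrightarrow> coprime p q \<Longrightarrow>
            (\<Sum>k. a (p * Suc k) * cnj (a (q * Suc k)) / of_nat (Suc k)) =
              (if p = 1 \<and> q = 1 then complex_of_real (C ^ 2) else 0)"
  shows "L2_inner (T_op a f) (T_op a g) = complex_of_real (C ^ 2) * L2_inner f g"
proof -
  define c where "c p q = (\<Sum>k. a (p * Suc k) * cnj (a (q * Suc k)) / of_nat (Suc k))" for p q
  have "((\<lambda>(p,q). c p q * dil_inner f g p q) has_sum (complex_of_real (C ^ 2) * dil_inner f g 1 1))
      coprime_pairs"
    by (rule has_sum_finite_neutralI[where B="{(1,1)}"]) (auto simp: coeff[folded c_def] split: if_splits)
  moreover have "((\<lambda>(p,q). c p q * dil_inner f g p q) has_sum L2_inner (T_op a f) (T_op a g))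
      coprime_pairs"
    unfolding c_def by (rule T_inner_coprime_expansion[OF f g a])
  ultimately show ?thesis by (simp add: has_sum_unique L2_inner_dil_inner[OF f])
qed

section \<open>Tent functions\<close>

definition tent :: "real \<Rightarrow> real \<Rightarrow> real" where
  "tent \<delta> y = max 0 (1 - \<bar>y - 1\<bar> / \<delta>)"

definition tent_at :: "real \<Rightarrow> nat \<Rightarrow> real \<Rightarrow> complex" where
  "tent_at \<delta> p x = complex_of_real (tent \<delta> (x / real p))"

definition tent_energy :: "real \<Rightarrow> real" where
  "tent_energy \<delta> = (\<integral>y. tent \<delta> y * tent \<delta> y \<partial>lborel)"

lemma tent_nonneg: "0 \<le> tent \<delta> y"
  unfolding tent_def by simp

lemma tent_le_one: "0 < \<delta> \<Longrightarrow> tent \<delta> y \<le> 1"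
  unfolding tent_def by simp

lemma tent_vanishes: "0 < \<delta> \<Longrightarrow> \<delta> \<le> \<bar>y - 1\<bar> \<Longrightarrow> tent \<delta> y = 0"
  unfolding tent_def by simp

lemma tent_ge_half: "0 < \<delta> \<Longrightarrow> \<bar>y - 1\<bar> \<le> \<delta> / 2 \<Longrightarrow> 1 / 2 \<le> tent \<delta> y"
  unfolding tent_def by (simp add: field_simps)

lemma tent_continuous: "continuous_on UNIV (tent \<delta>)"
  unfolding tent_def divide_inverse by (intro continuous_intros)

lemma tent_at_continuous: "continuous_on UNIV (tent_at \<delta> p)"
  unfolding tent_at_def divide_inverse
  by (intro continuous_on_of_real continuous_on_compose2[OF tent_continuous] continuous_intros) auto

lemma tent_at_bound:
  assumes "0 < \<delta>" "0 < p"
  shows "norm (tent_at \<delta> p x) \<le> 1 * indicator {real p * (1 - \<delta>)..real p * (1 + \<delta>)} x"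
proof (cases "x \<in> {real p * (1 - \<delta>)..real p * (1 + \<delta>)}")
  case True
  then show ?thesis using tent_le_one[OF assms(1)] tent_nonneg by (simp add: tent_at_def)
next
  case False
  then have "\<delta> \<le> \<bar>x / real p - 1\<bar>" using assms by (auto simp: field_simps abs_if)
  then show ?thesis using False tent_vanishes[OF assms(1)] by (simp add: tent_at_def)
qed

lemma tent_at_C0_pos:
  assumes "0 < \<delta>" "\<delta> < 1" "0 < p"
  shows "tent_at \<delta> p \<in> C0_pos"
  unfolding C0_pos_def
proof (intro CollectI conjI exI allI impI)
  show "continuous_on UNIV (tent_at \<delta> p)" by (rule tent_at_continuous)
  show "0 < real p * (1 - \<delta>)" "real p * (1 - \<delta>) \<le> real p * (1 + \<delta>)" using assms by auto
  fix x assume "x \<notin> {real p * (1 - \<delta>)..real p * (1 + \<delta>)}"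
  then show "tent_at \<delta> p x = 0" using tent_at_bound[OF assms(1,3), of x] by simp
qed

lemma tent_energy_lower:
  assumes \<delta>: "0 < \<delta>"
  shows "\<delta> / 4 \<le> tent_energy \<delta>"
proof -
  have sq_bound: "norm (tent \<delta> y * tent \<delta> y) \<le> 1 * indicator {1 - \<delta>..1 + \<delta>} y" for y
  proof -
    have "norm (tent \<delta> y * tent \<delta> y) \<le> tent \<delta> y"
      by (simp add: abs_mult mult_left_le tent_nonneg tent_le_one[OF \<delta>])
    also have "\<dots> = norm (tent_at \<delta> 1 y)" by (simp add: tent_at_def tent_nonneg)
    also have "\<dots> \<le> 1 * indicator {1 - \<delta>..1 + \<delta>} y" using tent_at_bound[OF \<delta>, of 1 y] by simp
    finally show ?thesis .
  qed
  have "continuous_on UNIV (\<lambda>y. tent \<delta> y * tent \<delta> y)"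
    using tent_continuous by (intro continuous_intros)
  then have "(\<lambda>y. tent \<delta> y * tent \<delta> y) \<in> borel_measurable lborel"
    using borel_measurable_continuous_onI by simp
  then have "integrable lborel (\<lambda>y. tent \<delta> y * tent \<delta> y)"
    using \<delta> by (intro integrable_bounded_by_indicator(1)[OF _ sq_bound]) auto
  moreover have box: "integrable lborel (\<lambda>y. (1/4) * indicator {1 - \<delta>/2..1 + \<delta>/2} y :: real)"
    by (intro integrable_mult_right integrable_real_indicator) (auto simp: emeasure_lborel_Icc_eq)
  moreover have "(1/4) * indicator {1 - \<delta>/2..1 + \<delta>/2} y \<le> tent \<delta> y * tent \<delta> y" for y
  proof (cases "y \<in> {1 - \<delta>/2..1 + \<delta>/2}")
    case True
    then have "1/2 \<le> tent \<delta> y" using tent_ge_half[OF \<delta>, of y] by (auto simp: abs_if)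
    then show ?thesis using True mult_mono[of "1/2" "tent \<delta> y" "1/2" "tent \<delta> y"] by simp
  qed (simp add: tent_nonneg)
  ultimately have "(\<integral>y. (1/4) * indicator {1 - \<delta>/2..1 + \<delta>/2} y \<partial>lborel) \<le> tent_energy \<delta>"
    unfolding tent_energy_def by (intro integral_mono)
  then show ?thesis using \<delta> by simp
qed

lemma dil_inner_tent_centres:
  assumes "0 < p" "0 < q"
  shows "dil_inner (tent_at \<delta> p) (tent_at \<delta> q) p q = complex_of_real (tent_energy \<delta>)"
  using assms unfolding dil_inner_def tent_energy_def tent_at_def by (simp flip: of_real_mult)

lemma dil_inner_tent_bound:
  assumes "0 < \<delta>" "0 < m" "0 < n" "0 < p" "0 < q"
  shows "norm (dil_inner (tent_at \<delta> p) (tent_at \<delta> q) m n)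
           \<le> 2 * \<delta> * sqrt (real p * real q) / sqrt (real m * real n)"
proof -
  note B = dilation_product_bound[OF tent_at_continuous tent_at_continuous
      tent_at_bound[OF assms(1,4)] _ tent_at_bound[OF assms(1,5)] _, of "real m" "real n"]
  have "norm (dil_inner (tent_at \<delta> p) (tent_at \<delta> q) m n)
      \<le> 1 * 1 * sqrt ((real p * (1 + \<delta>) - real p * (1 - \<delta>)) * (real q * (1 + \<delta>) - real q * (1 - \<delta>))
                     / (real m * real n))"
    unfolding dil_inner_def using assms B by (intro order_trans[OF integral_norm_bound]) auto
  also have "\<dots> = sqrt ((2 * \<delta>)\<^sup>2 * (real p * real q / (real m * real n)))"
    by (simp add: algebra_simps power2_eq_square)
  also have "\<dots> = 2 * \<delta> * sqrt (real p * real q) / sqrt (real m * real n)"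
    using assms(1) by (simp only: real_sqrt_mult real_sqrt_divide real_sqrt_abs) simp
  finally show ?thesis .
qed

text \<open>If s B = t A with s, t both within delta of 1, then A and B differ by less than
  delta (A + B); this separates the supports of dilated tents off the ray.\<close>
lemma near_ratio_gap:
  fixes A B s t \<delta> :: real
  assumes A: "0 < A" and B: "0 < B" and st: "s * B = t * A"
    and s: "\<bar>s - 1\<bar> < \<delta>" and t: "\<bar>t - 1\<bar> < \<delta>"
  shows "\<bar>B - A\<bar> < \<delta> * (A + B)"
proof -
  have "\<bar>B - A\<bar> = \<bar>(t - 1) * A - (s - 1) * B\<bar>" using st by (simp add: algebra_simps)
  also have "\<dots> \<le> \<bar>t - 1\<bar> * A + \<bar>s - 1\<bar> * B"
    using abs_triangle_ineq4[of "(t - 1) * A" "(s - 1) * B"] A B by (simp add: abs_mult)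
  also have "\<dots> < \<delta> * A + \<delta> * B"
    using s t A B by (intro add_strict_mono mult_strict_right_mono) auto
  finally show ?thesis by (simp add: distrib_left)
qed

lemma dil_inner_tent_off_ray:
  assumes mn: "0 < m" "0 < n" "0 < p" "0 < q" and off: "m * q \<noteq> n * p"
  shows "eventually (\<lambda>\<delta>. dil_inner (tent_at \<delta> p) (tent_at \<delta> q) m n = 0) (at_right 0)"
proof -
  define A where "A = real m * real q"
  define B where "B = real n * real p"
  have A: "0 < A" and B: "0 < B" using mn by (auto simp: A_def B_def)
  have "A \<noteq> B" using off unfolding A_def B_def by (metis of_nat_eq_iff of_nat_mult)
  then have gap: "0 < \<bar>B - A\<bar> / (A + B)" using A B by simp
  have "dil_inner (tent_at \<delta> p) (tent_at \<delta> q) m n = 0"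
    if \<delta>: "0 < \<delta>" "\<delta> < \<bar>B - A\<bar> / (A + B)" for \<delta>
  proof -
    have zero: "tent \<delta> (real m * x / real p) * tent \<delta> (real n * x / real q) = 0" for x
    proof (rule ccontr)
      define s where "s = real m * x / real p"
      define t where "t = real n * x / real q"
      assume "tent \<delta> (real m * x / real p) * tent \<delta> (real n * x / real q) \<noteq> 0"
      then have "tent \<delta> s \<noteq> 0" "tent \<delta> t \<noteq> 0" unfolding s_def t_def by auto
      then have s: "\<bar>s - 1\<bar> < \<delta>" and t: "\<bar>t - 1\<bar> < \<delta>"
        using tent_vanishes[OF \<delta>(1)] by (meson not_le)+
      have "s * B = t * A" unfolding s_def t_def A_def B_def using mn by (simp add: field_simps)
      then have "\<bar>B - A\<bar> < \<delta> * (A + B)" by (rule near_ratio_gap[OF A B _ s t])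
      then show False using \<delta>(2) A B by (simp add: pos_less_divide_eq)
    qed
    show ?thesis by (simp add: dil_inner_def tent_at_def zero flip: of_real_mult)
  qed
  then show ?thesis
    using eventually_at_right_real[OF gap] by (rule eventually_mono[rotated]) auto
qed

lemma coprime_ray:
  assumes "0 < m" "0 < p" "coprime p (q::nat)" "m * q = n * p"
  shows "\<exists>k. m = p * Suc k \<and> n = q * Suc k"
proof -
  have "p dvd m * q" using assms(4) by simp
  then obtain j where j: "m = p * j" using assms(3) by (auto simp: coprime_dvd_mult_left_iff)
  then obtain k where k: "j = Suc k" using assms(1) by (cases j) auto
  have "p * (q * j) = p * n" using assms(4) j by (simp add: mult_ac)
  then have "n = q * j" using assms(2) by simp
  then show ?thesis using j k by blast
qed

lemma dil_inner_tent_limit: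
  assumes mn: "0 < m" "0 < n" and pq: "0 < p" "0 < q" "coprime p q"
  shows "eventually (\<lambda>\<delta>. dil_inner (tent_at \<delta> p) (tent_at \<delta> q) m n / complex_of_real (tent_energy \<delta>)
           = (if m * q = n * p then of_nat p / of_nat m else 0)) (at_right 0)"
proof (cases "m * q = n * p")
  case True
  obtain k where k: "m = Suc k * p" "n = Suc k * q"
    using coprime_ray[OF mn(1) pq(1,3) True] by (auto simp: mult.commute)
  have "dil_inner (tent_at \<delta> p) (tent_at \<delta> q) m n / complex_of_real (tent_energy \<delta>)
      = of_nat p / of_nat m" if "0 < \<delta>" for \<delta>
  proof -
    have E: "complex_of_real (tent_energy \<delta>) \<noteq> 0" using tent_energy_lower[OF that] that by simp
    have "dil_inner (tent_at \<delta> p) (tent_at \<delta> q) m n = complex_of_real (tent_energy \<delta>) / of_nat (Suc k)"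
      unfolding k dil_inner_scale[OF zero_less_Suc] dil_inner_tent_centres[OF pq(1,2)] ..
    moreover have "(of_nat p / of_nat m :: complex) = 1 / of_nat (Suc k)"
      using pq(1) unfolding k of_nat_mult by (simp del: of_nat_Suc)
    ultimately show ?thesis using E by simp
  qed
  then show ?thesis
    using True eventually_at_right_real[of 0 1] by (auto elim: eventually_mono)
next
  case False
  then show ?thesis
    using dil_inner_tent_off_ray[OF mn pq(1,2) False] by (auto elim: eventually_mono)
qed

section \<open>The isometry implies the coefficient identities\<close>

lemma pos_pairs_product_summable:
  fixes \<beta> :: "nat \<Rightarrow> real"
  assumes "summable (\<lambda>n. \<beta> (Suc n))" "\<And>n. 0 \<le> \<beta> n"
  shows "(\<lambda>(m,n). \<beta> m * \<beta> n) summable_on pos_pairs"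
proof -
  have "(\<lambda>(i,j). \<beta> (Suc i) * \<beta> (Suc j)) summable_on UNIV"
    using product_summable_on[of "\<lambda>n. \<beta> (Suc n)"] assms by simp
  then show ?thesis
    using summable_on_reindex_bij_betw[OF bij_Suc_pairs, of "\<lambda>(m,n). \<beta> m * \<beta> n"]
    by (simp add: case_prod_beta')
qed

text \<open>Restriction of the sum to the ray through the coprime pair (p,q): the weights p/m on
  the points m = p k of the ray turn the sum into the series c(p,q).\<close>
lemma ray_sum_sums:
  fixes a :: "nat \<Rightarrow> complex"
  assumes pq: "0 < p" "0 < q" "coprime p q"
    and hs: "((\<lambda>(m,n). a m * cnj (a n) * (if m * q = n * p then of_nat p / of_nat m else 0))
               has_sum R) pos_pairs"
  shows "(\<lambda>k. a (p * Suc k) * cnj (a (q * Suc k)) / of_nat (Suc k)) sums R"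
proof -
  define l where "l = (\<lambda>(m,n). a m * cnj (a n) * (if m * q = n * p then of_nat p / of_nat m else 0))"
  define \<phi> where "\<phi> k = (p * Suc k, q * Suc k)" for k
  have "(l has_sum R) (range \<phi>)"
  proof (rule has_sum_cong_neutral[THEN iffD1, OF _ _ _ hs[folded l_def]])
    fix x assume "x \<in> pos_pairs - range \<phi>"
    then obtain m n where x: "x = (m,n)" "0 < m" "(m,n) \<notin> range \<phi>" by auto
    then have "m * q \<noteq> n * p" using coprime_ray[OF x(2) pq(1,3)] by (auto simp: \<phi>_def)
    then show "l x = 0" by (simp add: l_def x)
  qed (use pq in \<open>auto simp: \<phi>_def\<close>)
  moreover have "inj \<phi>" using pq by (auto simp: \<phi>_def inj_def)
  ultimately have "((l \<circ> \<phi>) has_sum R) UNIV" using has_sum_reindex by blast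
  moreover have "(l \<circ> \<phi>) = (\<lambda>k. a (p * Suc k) * cnj (a (q * Suc k)) / of_nat (Suc k))"
  proof
    fix k
    have "p * Suc k * q = q * Suc k * p" by (simp only: mult_ac)
    moreover have "(of_nat p / of_nat (p * Suc k) :: complex) = 1 / of_nat (Suc k)"
      using pq(1) by (simp only: of_nat_mult) (simp add: field_simps del: of_nat_Suc)
    ultimately show "(l \<circ> \<phi>) k = a (p * Suc k) * cnj (a (q * Suc k)) / of_nat (Suc k)"
      by (simp add: l_def \<phi>_def)
  qed
  ultimately show ?thesis by (simp add: has_sum_imp_sums)
qed

lemma tent_test_has_sum:
  fixes a :: "nat \<Rightarrow> complex"
  assumes a: "summable (\<lambda>n. norm (a (Suc n)) / sqrt (real (Suc n)))"
    and iso: "\<forall>f\<in>C0_pos. \<forall>g\<in>C0_pos.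
            L2_inner (T_op a f) (T_op a g) = complex_of_real (C ^ 2) * L2_inner f g"
    and pq: "0 < p" "0 < q" "coprime p q"
  shows "eventually (\<lambda>\<delta>. ((\<lambda>(m,n). a m * cnj (a n) *
      (dil_inner (tent_at \<delta> p) (tent_at \<delta> q) m n / complex_of_real (tent_energy \<delta>)))
        has_sum (if p = 1 \<and> q = 1 then complex_of_real (C ^ 2) else 0)) pos_pairs) (at_right 0)"
proof -
  have "eventually (\<lambda>\<delta>. \<delta> \<in> {0<..<1}) (at_right (0::real))" by (rule eventually_at_right_real) simp
  moreover have "eventually (\<lambda>\<delta>. complex_of_real (C ^ 2) *
      (dil_inner (tent_at \<delta> p) (tent_at \<delta> q) 1 1 / complex_of_real (tent_energy \<delta>))
      = (if p = 1 \<and> q = 1 then complex_of_real (C ^ 2) else 0)) (at_right 0)"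
  proof -
    have "1 * q = 1 * p \<longleftrightarrow> p = 1 \<and> q = 1" using pq(3) by auto
    then have "eventually (\<lambda>\<delta>. dil_inner (tent_at \<delta> p) (tent_at \<delta> q) 1 1
        / complex_of_real (tent_energy \<delta>) = (if p = 1 \<and> q = 1 then 1 else 0)) (at_right 0)"
      using dil_inner_tent_limit[of 1 1 p q] pq by (auto elim!: eventually_mono)
    then show ?thesis by (rule eventually_mono) simp
  qed
  ultimately show ?thesis
  proof eventually_elim
    case (elim \<delta>)
    let ?f = "tent_at \<delta> p" and ?g = "tent_at \<delta> q"
    have fg: "?f \<in> C0_pos" "?g \<in> C0_pos" using elim(1) pq by (auto intro: tent_at_C0_pos)
    have "((\<lambda>(m,n). a m * cnj (a n) * dil_inner ?f ?g m n) has_sum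
        complex_of_real (C ^ 2) * dil_inner ?f ?g 1 1) pos_pairs"
      using T_inner_expansion[OF fg a] iso fg by (simp add: L2_inner_dil_inner)
    from has_sum_divide_const[OF this, of "complex_of_real (tent_energy \<delta>)"]
    show ?case using elim(2) by (simp add: case_prod_beta' times_divide_eq_right)
  qed
qed

lemma tent_term_bound:
  fixes a :: "nat \<Rightarrow> complex"
  assumes \<delta>: "0 < \<delta>" and mn: "0 < m" "0 < n" and pq: "0 < p" "0 < q"
  shows "norm (a m * cnj (a n) *
           (dil_inner (tent_at \<delta> p) (tent_at \<delta> q) m n / complex_of_real (tent_energy \<delta>)))
         \<le> 8 * sqrt (real p * real q) * (norm (a m) / sqrt (real m) * (norm (a n) / sqrt (real n)))"
proof -
  have E: "\<delta> / 4 \<le> tent_energy \<delta>" using tent_energy_lower[OF \<delta>] .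
  have "norm (a m * cnj (a n) *
        (dil_inner (tent_at \<delta> p) (tent_at \<delta> q) m n / complex_of_real (tent_energy \<delta>)))
      = norm (a m) * norm (a n) *
        (norm (dil_inner (tent_at \<delta> p) (tent_at \<delta> q) m n) / tent_energy \<delta>)"
    using E \<delta> by (simp add: norm_mult norm_divide)
  also have "\<dots> \<le> norm (a m) * norm (a n) *
      ((2 * \<delta> * sqrt (real p * real q) / sqrt (real m * real n)) / (\<delta> / 4))"
    using E \<delta> dil_inner_tent_bound[OF \<delta> mn pq] by (intro mult_left_mono frac_le) auto
  also have "\<dots> = 8 * sqrt (real p * real q) * (norm (a m) / sqrt (real m) * (norm (a n) / sqrt (real n)))"
    using \<delta> by (simp add: real_sqrt_mult field_simps)
  finally show ?thesis .
qed

lemma coefficient_identity_if_isometry: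
  fixes a :: "nat \<Rightarrow> complex"
  assumes a: "summable (\<lambda>n. norm (a (Suc n)) / sqrt (real (Suc n)))"
    and iso: "\<forall>f\<in>C0_pos. \<forall>g\<in>C0_pos.
            L2_inner (T_op a f) (T_op a g) = complex_of_real (C ^ 2) * L2_inner f g"
    and pq: "0 < p" "0 < q" "coprime p q"
  shows "(\<Sum>k. a (p * Suc k) * cnj (a (q * Suc k)) / of_nat (Suc k)) =
           (if p = 1 \<and> q = 1 then complex_of_real (C ^ 2) else 0)"
proof -
  define \<beta> where "\<beta> n = norm (a n) / sqrt (real n)" for n
  define t where "t \<delta> = (\<lambda>(m,n). a m * cnj (a n) *
      (dil_inner (tent_at \<delta> p) (tent_at \<delta> q) m n / complex_of_real (tent_energy \<delta>)))" for \<delta>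
  have "((\<lambda>(m,n). a m * cnj (a n) * (if m * q = n * p then of_nat p / of_nat m else 0))
          has_sum (if p = 1 \<and> q = 1 then complex_of_real (C ^ 2) else 0)) pos_pairs"
  proof (rule has_sum_eventually_const_dominated[where F="at_right 0" and t=t])
    show "((\<lambda>x. 8 * sqrt (real p * real q) * (\<lambda>(m,n). \<beta> m * \<beta> n) x) summable_on pos_pairs)"
      using a by (intro summable_on_cmult_right pos_pairs_product_summable) (auto simp: \<beta>_def)
    have "norm (t \<delta> (m,n)) \<le> 8 * sqrt (real p * real q) * (\<beta> m * \<beta> n)"
      if "0 < \<delta>" "0 < m" "0 < n" for \<delta> m n
      unfolding t_def \<beta>_def prod.case using that pq by (intro tent_term_bound) auto
    then show "eventually (\<lambda>\<delta>. \<forall>x\<in>pos_pairs.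
        norm (t \<delta> x) \<le> 8 * sqrt (real p * real q) * (\<lambda>(m,n). \<beta> m * \<beta> n) x) (at_right 0)"
      using eventually_at_right_real[of 0 1] by (auto elim!: eventually_mono)
    fix x assume "x \<in> pos_pairs"
    then obtain m n where x: "x = (m,n)" "0 < m" "0 < n" by auto
    show "eventually (\<lambda>\<delta>. t \<delta> x =
        (\<lambda>(m,n). a m * cnj (a n) * (if m * q = n * p then of_nat p / of_nat m else 0)) x) (at_right 0)"
      using dil_inner_tent_limit[OF x(2,3) pq] unfolding x t_def prod.case
      by (rule eventually_mono) simp
  qed (use tent_test_has_sum[OF a iso pq] in \<open>simp_all add: t_def\<close>)
  then show ?thesis by (rule sums_unique[OF ray_sum_sums[OF pq], symmetric])
qed

text \<open>The two directions are the lemmas of the two preceding parts.\<close>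
theorem proposition4:
  fixes a :: "nat \<Rightarrow> complex" and C :: real
  assumes "summable (\<lambda>n. norm (a (Suc n)) / sqrt (real (Suc n)))"
    and "C \<ge> 0"
  shows "(\<forall>f\<in>C0_pos. \<forall>g\<in>C0_pos.
            L2_inner (T_op a f) (T_op a g) = complex_of_real (C ^ 2) * L2_inner f g)
     \<longleftrightarrow>
         (\<forall>m0 n0 :: nat. 0 < m0 \<longrightarrow> 0 < n0 \<longrightarrow> coprime m0 n0 \<longrightarrow>
            (\<Sum>k. a (m0 * Suc k) * cnj (a (n0 * Suc k)) / of_nat (Suc k)) =
              (if m0 = 1 \<and> n0 = 1 then complex_of_real (C ^ 2) else 0))"
  using coefficient_identity_if_isometry[OF assms(1)]
    isometry_if_coefficient_identities[OF _ _ assms(1)]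
  by blast

end
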